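(* Let $P$ be a Poisson tensor on $\mathbb{R}^3$, let $H\in C^\infty(\mathbb{R}^3)$, let $S\in C^\infty(\mathbb{R}^3)$ satisfy $PdS=0$, and let $g$ be the symmetric tensor with components $g^{ij}=H^iH^j-\delta^{ij}\sum_k H^kH^k$. Consider the system $\dot{x}=PdH+gdS$, along which the time derivative of $S$ at a point $x$ is $dS/dt=d_xS\cdot(P\,d_xH+g\,d_xS)$. If $x$ is a regular point of $P$ (i.e. $P(x)\neq0$) with $d_xS\neq 0$, then $dS/dt=0$ at $x$ if and only if $x$ is an equilibrium of this system.
   Context: $\mathbb{R}^3$ carries the standard Euclidean metric, used to identify tangent and cotangent spaces with $\mathbb{R}^3$ and to pair covectors with vectors (denoted by a dot); $H^i=H_i=\partial H/\partial x^i$. A Poisson tensor is a skew-symmetric bivector field satisfying the Jacobi identity. *)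

theory Defs
  imports "HOL-Analysis.Analysis"
begin

definition pd :: "3 \<Rightarrow> (real^3 \<Rightarrow> 'b::real_normed_vector) \<Rightarrow> real^3 \<Rightarrow> 'b" where
  "pd i f x = frechet_derivative f (at x) (axis i 1)"

fun iter_pd :: "3 list \<Rightarrow> (real^3 \<Rightarrow> 'b::real_normed_vector) \<Rightarrow> real^3 \<Rightarrow> 'b" where
  "iter_pd [] f = f"
| "iter_pd (i # is) f = pd i (iter_pd is f)"

definition smooth :: "(real^3 \<Rightarrow> 'b::real_normed_vector) \<Rightarrow> bool" where
  "smooth f \<longleftrightarrow> (\<forall>is x. iter_pd is f differentiable (at x))"

text \<open>Differential of a function, identified with a vector via the Euclidean metric.\<close>
definition dif :: "(real^3 \<Rightarrow> real) \<Rightarrow> real^3 \<Rightarrow> real^3" where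
  "dif f x = (\<chi> i. pd i f x)"

text \<open>Poisson tensor: smooth bivector field (components P x $ i $ j = P^{ij}(x)),
  skew-symmetric, satisfying the Jacobi identity.\<close>
definition poisson_tensor :: "(real^3 \<Rightarrow> real^3^3) \<Rightarrow> bool" where
  "poisson_tensor P \<longleftrightarrow> smooth P
     \<and> (\<forall>x i j. P x $ i $ j = - (P x $ j $ i))
     \<and> (\<forall>x i j k. (\<Sum>l\<in>UNIV.
            P x $ i $ l * pd l (\<lambda>y. P y $ j $ k) x
          + P x $ j $ l * pd l (\<lambda>y. P y $ k $ i) x
          + P x $ k $ l * pd l (\<lambda>y. P y $ i $ j) x) = 0)"

definition gtensor :: "(real^3 \<Rightarrow> real) \<Rightarrow> real^3 \<Rightarrow> real^3^3" where
  "gtensor H x = (\<chi> i j. dif H x $ i * dif H x $ j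
                        - (if i = j then 1 else 0) * (\<Sum>k\<in>UNIV. dif H x $ k * dif H x $ k))"

definition vfield :: "(real^3 \<Rightarrow> real^3^3) \<Rightarrow> (real^3 \<Rightarrow> real) \<Rightarrow> (real^3 \<Rightarrow> real) \<Rightarrow> real^3 \<Rightarrow> real^3" where
  "vfield P H S x = P x *v dif H x + gtensor H x *v dif S x"

end

theory Submission
  imports Defs
begin

text \<open>Since \<open>P\<close> is skew and annihilates \<open>dS\<close>, the Hamiltonian part does not change \<open>S\<close>, and
  \<open>g dS = (dH\<cdot>dS) dH - |dH|\<^sup>2 dS\<close>. Hence \<open>dS/dt = (dH\<cdot>dS)\<^sup>2 - |dH|\<^sup>2 |dS|\<^sup>2 \<le> 0\<close>, with equality
  in Cauchy--Schwarz exactly when \<open>dH = c dS\<close>; then \<open>P dH = c P dS = 0\<close> and \<open>g dS = 0\<close>.\<close>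

lemma gtensor_mult_vec:
  "gtensor H x *v s = (dif H x \<bullet> s) *\<^sub>R dif H x - (dif H x \<bullet> dif H x) *\<^sub>R s"
proof -
  define h where "h = dif H x"
  have "(gtensor H x *v s) $ i = (\<Sum>j\<in>UNIV. h$i * h$j * s$j - (if i = j then (h \<bullet> h) * s$j else 0))"
    for i
    unfolding gtensor_def matrix_vector_mult_def h_def[symmetric]
    by (simp only: vec_lambda_beta, intro sum.cong refl) (simp add: inner_vec_def algebra_simps)
  also have "\<dots> i = h$i * (h \<bullet> s) - (h \<bullet> h) * s$i" for i
    by (simp add: sum_subtractf inner_vec_def sum_distrib_left mult.assoc)
  finally show ?thesis by (simp add: vec_eq_iff h_def)
qed

lemma skew_matrix_inner_mult:
  fixes A :: "real^'n^'n"
  assumes "transpose A = - A"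
  shows "x \<bullet> (A *v y) = - ((A *v x) \<bullet> y)"
proof -
  have "x \<bullet> (A *v y) = (transpose A *v x) \<bullet> y"
    by (simp add: dot_lmul_matrix[symmetric])
  also have "transpose A *v x = - (A *v x)"
    using assms by (simp add: matrix_vector_mult_def vec_eq_iff sum_negf)
  finally show ?thesis by simp
qed

lemma poisson_tensor_transpose:
  assumes "poisson_tensor P"
  shows "transpose (P x) = - P x"
proof (intro iffD2[OF vec_eq_iff] allI)
  fix i j
  have "P x $ j $ i = - (P x $ i $ j)"
    using assms unfolding poisson_tensor_def by blast
  then show "transpose (P x) $ i $ j = (- P x) $ i $ j"
    by (simp add: transpose_def)
qed

lemma cauchy_schwarz_eq_imp_parallel:
  fixes h s :: "'a::real_inner"
  assumes "s \<noteq> 0" and "(h \<bullet> s)\<^sup>2 = (h \<bullet> h) * (s \<bullet> s)"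
  shows "h = ((h \<bullet> s) / (s \<bullet> s)) *\<^sub>R s"
proof -
  define w where "w = (s \<bullet> s) *\<^sub>R h - (h \<bullet> s) *\<^sub>R s"
  have "w \<bullet> w = (s \<bullet> s) * ((h \<bullet> h) * (s \<bullet> s) - (h \<bullet> s)\<^sup>2)"
    unfolding w_def
    by (simp add: inner_commute algebra_simps power2_eq_square)
  with assms(2) have "(s \<bullet> s) *\<^sub>R h = (h \<bullet> s) *\<^sub>R s"
    by (simp add: w_def)
  then have "inverse (s \<bullet> s) *\<^sub>R (s \<bullet> s) *\<^sub>R h = inverse (s \<bullet> s) *\<^sub>R (h \<bullet> s) *\<^sub>R s"
    by simp
  then show ?thesis
    using assms(1) by (simp add: divide_inverse mult.commute)
qed

theorem mainTheorem8:
  fixes P :: "real^3 \<Rightarrow> real^3^3" and H S :: "real^3 \<Rightarrow> real" and x :: "real^3"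
  assumes "poisson_tensor P"
    and "smooth H" and "smooth S"
    and "\<forall>y. P y *v dif S y = 0"
    and "P x \<noteq> 0"
    and "dif S x \<noteq> 0"
  shows "dif S x \<bullet> vfield P H S x = 0 \<longleftrightarrow> vfield P H S x = 0"
proof
  define h s where "h = dif H x" and "s = dif S x"
  have skew: "transpose (P x) = - P x"
    using assms(1) by (rule poisson_tensor_transpose)
  have Ps: "P x *v s = 0"
    using assms(4) by (simp add: s_def)
  have v: "vfield P H S x = P x *v h + ((h \<bullet> s) *\<^sub>R h - (h \<bullet> h) *\<^sub>R s)"
    by (simp add: vfield_def gtensor_mult_vec h_def s_def)
  assume "dif S x \<bullet> vfield P H S x = 0"
  then have "(h \<bullet> s)\<^sup>2 = (h \<bullet> h) * (s \<bullet> s)"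
    using skew_matrix_inner_mult[OF skew, of s h] Ps
    by (simp add: v s_def[symmetric] inner_add_right inner_diff_right inner_commute power2_eq_square)
  then obtain c where "h = c *\<^sub>R s"
    using cauchy_schwarz_eq_imp_parallel assms(6) s_def by blast
  then show "vfield P H S x = 0"
    unfolding v using Ps by (simp add: matrix_vector_mult_scaleR algebra_simps)
qed simp

end
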